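(* For every mixed graph $G$ without directed cycles, $\mathrm{nd}_{\mathrm m}(G)\le\mathrm{vc}(G)+4^{\mathrm{vc}(G)}$, where $\mathrm{vc}(G)$ is the vertex cover number of the underlying undirected graph.
   Context: A mixed graph $G$ consists of a finite vertex set $V(G)$, a set $E(G)$ of undirected edges and a set $A(G)$ of directed arcs; it is simple and contains no directed cycle. $N^+(v)$, $N^-(v)$, $N^{\mathrm u}(v)$ denote out-, in- and undirected neighbors. Vertices $u,v$ have the same mixed type if $N^{\mathrm u}(u)\setminus\{v\}=N^{\mathrm u}(v)\setminus\{u\}$, $N^-(u)=N^-(v)$, $N^+(u)=N^+(v)$; $\mathrm{nd}_{\mathrm m}(G)$ is the number of mixed types. The underlying undirected graph replaces every arc by an edge. *)

theory Defs
  imports Main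
begin

definition mixed_graph :: "'a set \<Rightarrow> 'a set set \<Rightarrow> ('a \<times> 'a) set \<Rightarrow> bool" where
  "mixed_graph V E A \<longleftrightarrow>
     finite V \<and>
     (\<forall>e\<in>E. \<exists>u v. e = {u, v} \<and> u \<noteq> v \<and> u \<in> V \<and> v \<in> V) \<and>
     A \<subseteq> V \<times> V \<and>
     (\<forall>u v. (u, v) \<in> A \<longrightarrow> u \<noteq> v \<and> {u, v} \<notin> E \<and> (v, u) \<notin> A)"

definition no_directed_cycle :: "('a \<times> 'a) set \<Rightarrow> bool" where
  "no_directed_cycle A \<longleftrightarrow> acyclic A"

definition Nu :: "'a set set \<Rightarrow> 'a \<Rightarrow> 'a set" where
  "Nu E v = {u. {u, v} \<in> E}"

definition Nout :: "('a \<times> 'a) set \<Rightarrow> 'a \<Rightarrow> 'a set" where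
  "Nout A v = {w. (v, w) \<in> A}"

definition Nin :: "('a \<times> 'a) set \<Rightarrow> 'a \<Rightarrow> 'a set" where
  "Nin A v = {w. (w, v) \<in> A}"

definition same_mixed_type :: "'a set set \<Rightarrow> ('a \<times> 'a) set \<Rightarrow> 'a \<Rightarrow> 'a \<Rightarrow> bool" where
  "same_mixed_type E A u v \<longleftrightarrow>
     Nu E u - {v} = Nu E v - {u} \<and> Nin A u = Nin A v \<and> Nout A u = Nout A v"

definition nd_m :: "'a set \<Rightarrow> 'a set set \<Rightarrow> ('a \<times> 'a) set \<Rightarrow> nat" where
  "nd_m V E A = card (V // {(u, v). u \<in> V \<and> v \<in> V \<and> same_mixed_type E A u v})"

definition underlying_edges :: "'a set set \<Rightarrow> ('a \<times> 'a) set \<Rightarrow> 'a set set" where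
  "underlying_edges E A = E \<union> {{u, v} | u v. (u, v) \<in> A}"

definition vertex_cover :: "'a set \<Rightarrow> 'a set set \<Rightarrow> 'a set \<Rightarrow> bool" where
  "vertex_cover V F C \<longleftrightarrow> C \<subseteq> V \<and> (\<forall>e\<in>F. e \<inter> C \<noteq> {})"

definition vc :: "'a set \<Rightarrow> 'a set set \<Rightarrow> ('a \<times> 'a) set \<Rightarrow> nat" where
  "vc V E A = (LEAST k. \<exists>C. vertex_cover V (underlying_edges E A) C \<and> card C = k)"

end

theory Submission
  imports Defs "HOL-Library.FuncSet"
begin

text \<open>Fix a minimum vertex cover \<open>C\<close> of the underlying graph. A vertex outside \<open>C\<close> has all
  its neighbours in \<open>C\<close>, and its relation to each \<open>c \<in> C\<close> is one of four mutually exclusive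
  kinds: undirected neighbour, in-neighbour, out-neighbour, or non-neighbour. Two vertices outside
  \<open>C\<close> with the same profile \<open>C \<rightarrow> {4 kinds}\<close> are non-adjacent twins and therefore have the same
  mixed type. So the vertices outside \<open>C\<close> meet at most \<open>4^|C|\<close> classes, and those in \<open>C\<close> at
  most \<open>|C|\<close>.\<close>

lemma card_image_le_if_factors:
  assumes "finite S" and "\<And>x y. x \<in> S \<Longrightarrow> y \<in> S \<Longrightarrow> f x = f y \<Longrightarrow> g x = g y"
  shows "card (g ` S) \<le> card (f ` S)"
proof -
  have "g x = (g \<circ> inv_into S f) (f x)" if "x \<in> S" for x
  proof -
    from that have fx: "f x \<in> f ` S"
      by simp
    have "g x = g (inv_into S f (f x))"
      by (rule assms(2)[OF that inv_into_into[OF fx]]) (simp add: f_inv_into_f[OF fx])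
    then show ?thesis
      by simp
  qed
  then have "g ` S = (g \<circ> inv_into S f) ` f ` S"
    unfolding image_comp by (intro image_cong) auto
  then show ?thesis
    using card_image_le[OF finite_imageI[OF assms(1)]] by simp
qed

lemma card_quotient_le_if_factors:
  assumes "finite V" and "C \<subseteq> V"
    and "\<And>x y. x \<in> V - C \<Longrightarrow> y \<in> V - C \<Longrightarrow> f x = f y \<Longrightarrow> R `` {x} = R `` {y}"
  shows "card (V // R) \<le> card C + card (f ` (V - C))"
proof -
  let ?cls = "\<lambda>x. R `` {x}"
  have "V = C \<union> (V - C)"
    using assms(2) by blast
  then have "V // R = ?cls ` C \<union> ?cls ` (V - C)"
    unfolding quotient_def UNION_singleton_eq_range by (metis image_Un)
  then have "card (V // R) \<le> card (?cls ` C) + card (?cls ` (V - C))"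
    by (simp add: card_Un_le)
  also have "\<dots> \<le> card C + card (f ` (V - C))"
  proof (rule add_mono)
    show "card (?cls ` C) \<le> card C"
      by (rule card_image_le[OF finite_subset[OF assms(2,1)]])
    show "card (?cls ` (V - C)) \<le> card (f ` (V - C))"
      by (rule card_image_le_if_factors[OF finite_Diff[OF assms(1)] assms(3)])
  qed
  finally show ?thesis .
qed

lemma same_mixed_type_twins:
  assumes "Nu E x = Nu E y" and "Nin A x = Nin A y" and "Nout A x = Nout A y"
    and "x \<notin> Nu E y"
  shows "same_mixed_type E A x z \<longleftrightarrow> same_mixed_type E A y z"
proof -
  have y_notin: "y \<notin> Nu E x"
    using assms(4) by (simp add: Nu_def insert_commute)
  have z_sym: "u \<in> Nu E z \<longleftrightarrow> z \<in> Nu E u" for u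
    by (simp add: Nu_def insert_commute)
  have "Nu E x - {z} = Nu E z - {x} \<longleftrightarrow> Nu E y - {z} = Nu E z - {y}"
  proof (cases "z \<in> Nu E x")
    case True
    \<comment> \<open>each equation would put the other twin, a neighbour of \<open>z\<close>, into \<open>Nu E x = Nu E y\<close>\<close>
    then have "x \<in> Nu E z" "y \<in> Nu E z"
      using assms(1) z_sym by auto
    then have "x \<noteq> y \<Longrightarrow> Nu E x - {z} \<noteq> Nu E z - {x} \<and> Nu E y - {z} \<noteq> Nu E z - {y}"
      using assms(1,4) y_notin by blast
    then show ?thesis
      by (cases "x = y") simp_all
  next
    case False
    then have "x \<notin> Nu E z" "y \<notin> Nu E z"
      using assms(1) z_sym by auto
    then show ?thesis
      using assms(1) by simp
  qed
  then show ?thesis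
    using assms(2,3) unfolding same_mixed_type_def by simp
qed

lemma mixed_graph_neighbourhoods_disjoint:
  assumes "mixed_graph V E A"
  shows "Nu E x \<inter> Nin A x = {}" and "Nu E x \<inter> Nout A x = {}" and "Nin A x \<inter> Nout A x = {}"
proof -
  have "{u, v} \<notin> E \<and> {v, u} \<notin> E \<and> (v, u) \<notin> A" if "(u, v) \<in> A" for u v
    using assms that unfolding mixed_graph_def by (simp add: insert_commute)
  then show "Nu E x \<inter> Nin A x = {}" and "Nu E x \<inter> Nout A x = {}" and "Nin A x \<inter> Nout A x = {}"
    unfolding Nu_def Nin_def Nout_def by blast+
qed

lemma neighbourhoods_subset_vertex_cover:
  assumes "vertex_cover V (underlying_edges E A) C" and "x \<notin> C"
  shows "Nu E x \<subseteq> C" and "Nin A x \<subseteq> C" and "Nout A x \<subseteq> C"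
proof -
  have covered: "a \<in> C \<or> b \<in> C" if "{a, b} \<in> E \<or> (a, b) \<in> A" for a b
  proof -
    from that have "{a, b} \<in> underlying_edges E A"
      unfolding underlying_edges_def by auto
    with assms(1) have "{a, b} \<inter> C \<noteq> {}"
      unfolding vertex_cover_def by blast
    then show ?thesis
      by simp
  qed
  show "Nu E x \<subseteq> C" "Nin A x \<subseteq> C" "Nout A x \<subseteq> C"
    using covered[of _ x] covered[of x] assms(2) unfolding Nu_def Nin_def Nout_def by auto
qed

lemma ex_vertex_cover_card_vc:
  assumes "mixed_graph V E A"
  shows "\<exists>C. vertex_cover V (underlying_edges E A) C \<and> card C = vc V E A"
proof -
  have "vertex_cover V (underlying_edges E A) V"
    using assms unfolding vertex_cover_def underlying_edges_def mixed_graph_def by blast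
  then have "\<exists>k C. vertex_cover V (underlying_edges E A) C \<and> card C = k"
    by blast
  then show ?thesis
    unfolding vc_def by (rule LeastI_ex)
qed

datatype adjacency_kind = Undirected | Incoming | Outgoing | Nonadjacent

lemma UNIV_adjacency_kind: "(UNIV :: adjacency_kind set) = {Undirected, Incoming, Outgoing, Nonadjacent}"
  using adjacency_kind.exhaust by auto

lemma card_UNIV_adjacency_kind: "card (UNIV :: adjacency_kind set) = 4"
  by (simp add: UNIV_adjacency_kind)

definition adjacency :: "'a set set \<Rightarrow> ('a \<times> 'a) set \<Rightarrow> 'a \<Rightarrow> 'a \<Rightarrow> adjacency_kind" where
  "adjacency E A x c =
     (if c \<in> Nu E x then Undirected else if c \<in> Nin A x then Incoming
      else if c \<in> Nout A x then Outgoing else Nonadjacent)"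

definition adjacency_profile ::
    "'a set set \<Rightarrow> ('a \<times> 'a) set \<Rightarrow> 'a set \<Rightarrow> 'a \<Rightarrow> 'a \<Rightarrow> adjacency_kind" where
  "adjacency_profile E A C x = restrict (adjacency E A x) C"

lemma adjacency_eq_iff:
  assumes "mixed_graph V E A"
  shows "adjacency E A x c = adjacency E A y c \<longleftrightarrow>
    (c \<in> Nu E x \<longleftrightarrow> c \<in> Nu E y) \<and> (c \<in> Nin A x \<longleftrightarrow> c \<in> Nin A y) \<and> (c \<in> Nout A x \<longleftrightarrow> c \<in> Nout A y)"
  using mixed_graph_neighbourhoods_disjoint[OF assms, of x] mixed_graph_neighbourhoods_disjoint[OF assms, of y]
  unfolding adjacency_def by auto

lemma neighbourhoods_eq_if_adjacency_profile_eq: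
  assumes "mixed_graph V E A" and cover: "vertex_cover V (underlying_edges E A) C"
    and "x \<notin> C" "y \<notin> C" and "adjacency_profile E A C x = adjacency_profile E A C y"
  shows "Nu E x = Nu E y" and "Nin A x = Nin A y" and "Nout A x = Nout A y"
proof -
  have "(c \<in> Nu E x \<longleftrightarrow> c \<in> Nu E y) \<and> (c \<in> Nin A x \<longleftrightarrow> c \<in> Nin A y) \<and> (c \<in> Nout A x \<longleftrightarrow> c \<in> Nout A y)"
    for c
  proof (cases "c \<in> C")
    case True
    then have "adjacency E A x c = adjacency E A y c"
      using assms(5) unfolding adjacency_profile_def by (metis restrict_apply')
    then show ?thesis
      using adjacency_eq_iff[OF assms(1)] by blast
  next
    case False
    then show ?thesis
      using neighbourhoods_subset_vertex_cover[OF cover] assms(3,4) by blast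
  qed
  then show "Nu E x = Nu E y" "Nin A x = Nin A y" "Nout A x = Nout A y"
    by blast+
qed

lemma same_mixed_type_if_adjacency_profile_eq:
  assumes "mixed_graph V E A" and cover: "vertex_cover V (underlying_edges E A) C"
    and "x \<notin> C" "y \<notin> C" and "adjacency_profile E A C x = adjacency_profile E A C y"
  shows "same_mixed_type E A x z \<longleftrightarrow> same_mixed_type E A y z"
proof (rule same_mixed_type_twins)
  show "Nu E x = Nu E y" "Nin A x = Nin A y" "Nout A x = Nout A y"
    using neighbourhoods_eq_if_adjacency_profile_eq[OF assms] by simp_all
  show "x \<notin> Nu E y"
    using neighbourhoods_subset_vertex_cover(1)[OF cover \<open>y \<notin> C\<close>] \<open>x \<notin> C\<close> by blast
qed

lemma card_adjacency_profiles_le: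
  assumes "finite C"
  shows "card (adjacency_profile E A C ` S) \<le> 4 ^ card C"
proof -
  have "adjacency_profile E A C ` S \<subseteq> C \<rightarrow>\<^sub>E UNIV"
    unfolding adjacency_profile_def by auto
  then have "card (adjacency_profile E A C ` S) \<le> card (C \<rightarrow>\<^sub>E (UNIV :: adjacency_kind set))"
    using assms by (intro card_mono) (simp_all add: finite_PiE UNIV_adjacency_kind)
  also have "\<dots> = 4 ^ card C"
    using assms by (simp add: card_PiE card_UNIV_adjacency_kind)
  finally show ?thesis .
qed

theorem mainTheorem16:
  fixes V :: "'a set" and E :: "'a set set" and A :: "('a \<times> 'a) set"
  assumes "mixed_graph V E A" and "no_directed_cycle A"
  shows "nd_m V E A \<le> vc V E A + 4 ^ vc V E A"
proof -
  obtain C where cover: "vertex_cover V (underlying_edges E A) C" and card_C: "card C = vc V E A"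
    using ex_vertex_cover_card_vc[OF assms(1)] by blast
  have "finite V"
    using assms(1) by (simp add: mixed_graph_def)
  moreover have "C \<subseteq> V"
    using cover unfolding vertex_cover_def by blast
  ultimately have "finite C"
    by (rule rev_finite_subset)
  have "nd_m V E A \<le> card C + card (adjacency_profile E A C ` (V - C))"
    unfolding nd_m_def
  proof (rule card_quotient_le_if_factors[OF \<open>finite V\<close> \<open>C \<subseteq> V\<close>])
    fix x y
    assume x: "x \<in> V - C" and y: "y \<in> V - C"
      and "adjacency_profile E A C x = adjacency_profile E A C y"
    then have "same_mixed_type E A x z \<longleftrightarrow> same_mixed_type E A y z" for z
      by (intro same_mixed_type_if_adjacency_profile_eq[OF assms(1) cover]) simp_all
    with x y show "{(u, v). u \<in> V \<and> v \<in> V \<and> same_mixed_type E A u v} `` {x}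
      = {(u, v). u \<in> V \<and> v \<in> V \<and> same_mixed_type E A u v} `` {y}"
      by auto
  qed
  also have "\<dots> \<le> card C + 4 ^ card C"
    using card_adjacency_profiles_le[OF \<open>finite C\<close>] by simp
  finally show ?thesis
    unfolding card_C .
qed

end
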